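(* Let $T$ be an unmixed balanced tree of height 3, labeled as in the context. Then every facet of $\mathcal{S}_{even}(T)$ has the form $V_{even}\setminus\{u_{1,a_1},\dots,u_{p,a_p}\}$ with $1\le a_i\le k_i$, and ordering the facets $F$ of $\mathcal{S}_{even}(T)$ by the order $<_P$ of their vectors $\nu(F)=(a_1,\dots,a_p)$ gives a shelling of $\mathcal{S}_{even}(T)$.
   Context: $N(v)=\{u:uv\in E\}$, $N(D)=\bigcup_{v\in D}N(v)$. A leaf is a vertex of degree 1; height of a vertex = minimum distance to a leaf; $V_k$ = vertices of height $k$; $V_{even}$, $V_{odd}$ = vertices of even/odd height; $T$ is balanced if no two adjacent vertices have the same height. A TD-set is $D$ with $N(D)=V$, minimal if no proper subset is; $T$ unmixed if all minimal TD-sets have equal size. An odd-TD-set is $D$ with $N(D)\supseteq V_{odd}$, minimal if no proper subset is one; $\mathcal{S}_{even}(T)$ is the simplicial complex on $V_{even}$ whose facets are $V_{even}\setminus D$, $D$ a minimal odd-TD-set. Labeling: in an unmixed balanced tree of height 3, each height-1 vertex has exactly one neighbor of height 2 and vice versa; write $V_1=\{s_1,\dots,s_p\}$, let $u_{i,1}$ be the unique height-2 neighbor of $s_i$ (so $V_2=\{u_{1,1},\dots,u_{p,1}\}$), $k_i=|N(s_i)|$, and $\{u_{i,2},\dots,u_{i,k_i}\}=N(s_i)\cap V_0$. For $\alpha=(a_1,\dots,a_p)$ let $\ell(\alpha)=|\{i: a_i=1\}|$; define $\alpha<_P\beta$ iff $\ell(\alpha)>\ell(\beta)$, or $\ell(\alpha)=\ell(\beta)$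 and $\alpha$ is lexicographically smaller than $\beta$. A pure simplicial complex is shelled by an ordering $F_1,\dots,F_m$ of its facets if for all $1\le i<j\le m$ there exist $v\in F_j\setminus F_i$ and $k<j$ with $F_j\setminus F_k=\{v\}$. *)

theory Defs
  imports Main
begin

definition simple_graph :: "'a set \<Rightarrow> 'a set set \<Rightarrow> bool" where
  "simple_graph V E \<longleftrightarrow> finite V \<and>
     (\<forall>e\<in>E. \<exists>x y. x \<noteq> y \<and> e = {x, y} \<and> x \<in> V \<and> y \<in> V)"

definition walk :: "'a set set \<Rightarrow> 'a list \<Rightarrow> bool" where
  "walk E xs \<longleftrightarrow> xs \<noteq> [] \<and> (\<forall>i. i + 1 < length xs \<longrightarrow> {xs ! i, xs ! (i + 1)} \<in> E)"

definition connected_graph :: "'a set \<Rightarrow> 'a set set \<Rightarrow> bool" where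
  "connected_graph V E \<longleftrightarrow>
     (\<forall>x\<in>V. \<forall>y\<in>V. \<exists>xs. walk E xs \<and> set xs \<subseteq> V \<and> hd xs = x \<and> last xs = y)"

definition has_cycle :: "'a set set \<Rightarrow> bool" where
  "has_cycle E \<longleftrightarrow>
     (\<exists>xs. 3 \<le> length xs \<and> distinct xs \<and> walk E xs \<and> {last xs, hd xs} \<in> E)"

definition is_tree :: "'a set \<Rightarrow> 'a set set \<Rightarrow> bool" where
  "is_tree V E \<longleftrightarrow> simple_graph V E \<and> V \<noteq> {} \<and> connected_graph V E \<and> \<not> has_cycle E"

definition gdist :: "'a set set \<Rightarrow> 'a \<Rightarrow> 'a \<Rightarrow> nat" where
  "gdist E x y = (LEAST n. \<exists>xs. walk E xs \<and> hd xs = x \<and> last xs = y \<and> length xs = n + 1)"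

definition nbhd :: "'a set set \<Rightarrow> 'a \<Rightarrow> 'a set" where
  "nbhd E v = {u. {u, v} \<in> E}"

definition nbhd_set :: "'a set set \<Rightarrow> 'a set \<Rightarrow> 'a set" where
  "nbhd_set E D = (\<Union>v\<in>D. nbhd E v)"

definition is_leaf :: "'a set \<Rightarrow> 'a set set \<Rightarrow> 'a \<Rightarrow> bool" where
  "is_leaf V E v \<longleftrightarrow> v \<in> V \<and> card (nbhd E v) = 1"

definition vheight :: "'a set \<Rightarrow> 'a set set \<Rightarrow> 'a \<Rightarrow> nat" where
  "vheight V E v = (LEAST n. \<exists>l. is_leaf V E l \<and> gdist E v l = n)"

definition tree_height :: "'a set \<Rightarrow> 'a set set \<Rightarrow> nat" where
  "tree_height V E = Max (vheight V E ` V)"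

definition level :: "'a set \<Rightarrow> 'a set set \<Rightarrow> nat \<Rightarrow> 'a set" where
  "level V E k = {v \<in> V. vheight V E v = k}"

definition V_even :: "'a set \<Rightarrow> 'a set set \<Rightarrow> 'a set" where
  "V_even V E = {v \<in> V. even (vheight V E v)}"

definition V_odd :: "'a set \<Rightarrow> 'a set set \<Rightarrow> 'a set" where
  "V_odd V E = {v \<in> V. odd (vheight V E v)}"

definition balanced :: "'a set \<Rightarrow> 'a set set \<Rightarrow> bool" where
  "balanced V E \<longleftrightarrow> (\<forall>x y. {x, y} \<in> E \<longrightarrow> vheight V E x \<noteq> vheight V E y)"

definition TD_set :: "'a set \<Rightarrow> 'a set set \<Rightarrow> 'a set \<Rightarrow> bool" where
  "TD_set V E D \<longleftrightarrow> D \<subseteq> V \<and> nbhd_set E D = V"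

definition minimal_TD_set :: "'a set \<Rightarrow> 'a set set \<Rightarrow> 'a set \<Rightarrow> bool" where
  "minimal_TD_set V E D \<longleftrightarrow> TD_set V E D \<and> (\<forall>D'. D' \<subset> D \<longrightarrow> \<not> TD_set V E D')"

definition unmixed :: "'a set \<Rightarrow> 'a set set \<Rightarrow> bool" where
  "unmixed V E \<longleftrightarrow>
     (\<forall>D1 D2. minimal_TD_set V E D1 \<longrightarrow> minimal_TD_set V E D2 \<longrightarrow> card D1 = card D2)"

definition odd_TD_set :: "'a set \<Rightarrow> 'a set set \<Rightarrow> 'a set \<Rightarrow> bool" where
  "odd_TD_set V E D \<longleftrightarrow> D \<subseteq> V \<and> V_odd V E \<subseteq> nbhd_set E D"

definition minimal_odd_TD_set :: "'a set \<Rightarrow> 'a set set \<Rightarrow> 'a set \<Rightarrow> bool" where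
  "minimal_odd_TD_set V E D \<longleftrightarrow> odd_TD_set V E D \<and> (\<forall>D'. D' \<subset> D \<longrightarrow> \<not> odd_TD_set V E D')"

definition S_even_facets :: "'a set \<Rightarrow> 'a set set \<Rightarrow> 'a set set" where
  "S_even_facets V E = {V_even V E - D | D. minimal_odd_TD_set V E D}"

text \<open>Vectors alpha = (a_1,...,a_p) are functions nat => nat, only indices 1..p matter.\<close>
definition ell :: "nat \<Rightarrow> (nat \<Rightarrow> nat) \<Rightarrow> nat" where
  "ell p a = card {i \<in> {1..p}. a i = 1}"

definition lex_less :: "nat \<Rightarrow> (nat \<Rightarrow> nat) \<Rightarrow> (nat \<Rightarrow> nat) \<Rightarrow> bool" where
  "lex_less p a b \<longleftrightarrow> (\<exists>j\<in>{1..p}. (\<forall>i\<in>{1..<j}. a i = b i) \<and> a j < b j)"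

definition P_less :: "nat \<Rightarrow> (nat \<Rightarrow> nat) \<Rightarrow> (nat \<Rightarrow> nat) \<Rightarrow> bool" where
  "P_less p a b \<longleftrightarrow> ell p a > ell p b \<or> (ell p a = ell p b \<and> lex_less p a b)"

definition shelling_order :: "'a set list \<Rightarrow> bool" where
  "shelling_order Fs \<longleftrightarrow>
     (\<forall>i j. i < j \<and> j < length Fs \<longrightarrow>
        (\<exists>v \<in> Fs ! j - Fs ! i. \<exists>k < j. Fs ! j - Fs ! k = {v}))"

end

theory Submission
  imports Defs
begin

text \<open>
  In a balanced tree of height 3 a minimal odd-TD-set D consists of vertices of height 0 or 2,
  and it dominates each s_i through exactly one of its even neighbours u_{i,1}, ..., u_{i,k_i}:
  a second one would make a leaf of D redundant. So D = {u_{1,a_1}, ..., u_{p,a_p}}, and such a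
  set is a minimal odd-TD-set iff it dominates V_3 and, whenever a_i = 1, also a_j = 1 for every
  j with u_{j,1} = u_{i,1}.

  For the shelling let \<nu>(F) = \<alpha> <_P \<beta> = \<nu>(G). If a_m = 1 \<noteq> b_m for some m, set
  b_j := 1 for all j with u_{j,1} = u_{m,1}; the new vector has more ones. Otherwise the ones of
  \<alpha> are among those of \<beta>, so \<alpha> is lexicographically smaller, and at the first difference j
  we have 2 \<le> a_j < b_j; set b_j := a_j. Either way the new facet H precedes G, and G - H is the
  single vertex u_{m,1} resp. u_{j,a_j}, which lies in G - F.
\<close>

section \<open>The order on vectors\<close>

lemma lex_less_irrefl: "\<not> lex_less p a a"
  unfolding lex_less_def by simp

lemma lex_less_trans:
  assumes "lex_less p a b" "lex_less p b c"
  shows "lex_less p a c"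
proof -
  obtain j1 where j1: "j1 \<in> {1..p}" "\<forall>i\<in>{1..<j1}. a i = b i" "a j1 < b j1"
    using assms(1) unfolding lex_less_def by blast
  obtain j2 where j2: "j2 \<in> {1..p}" "\<forall>i\<in>{1..<j2}. b i = c i" "b j2 < c j2"
    using assms(2) unfolding lex_less_def by blast
  have "\<forall>i\<in>{1..<min j1 j2}. a i = c i"
    using j1(2) j2(2) by simp
  moreover have "a (min j1 j2) < c (min j1 j2)"
    using j1 j2 by (cases j1 j2 rule: linorder_cases) (auto simp: min_def)
  moreover have "min j1 j2 \<in> {1..p}"
    using j1(1) j2(1) by (simp add: min_def)
  ultimately show ?thesis
    unfolding lex_less_def by blast
qed

lemma lex_less_total:
  assumes "\<exists>i\<in>{1..p}. a i \<noteq> b i"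
  shows "lex_less p a b \<or> lex_less p b a"
proof -
  let ?differ = "\<lambda>i. i \<in> {1..p} \<and> a i \<noteq> b i"
  define j where "j = (LEAST i. ?differ i)"
  obtain i0 where "?differ i0"
    using assms by blast
  then have "?differ j"
    unfolding j_def by (rule LeastI)
  then have j: "j \<in> {1..p}" "a j \<noteq> b j"
    by auto
  have before_j: "a i = b i" if i: "i \<in> {1..<j}" for i
  proof (rule ccontr)
    assume "a i \<noteq> b i"
    then have "j \<le> i"
      unfolding j_def using i j(1) by (intro Least_le) auto
    then show False
      using i by simp
  qed
  show ?thesis
  proof (cases "a j < b j")
    case True
    then show ?thesis
      unfolding lex_less_def using j(1) before_j by blast
  next
    case False
    then have "b j < a j"
      using j(2) by simp
    moreover have "\<forall>i\<in>{1..<j}. b i = a i"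
      using before_j by simp
    ultimately show ?thesis
      unfolding lex_less_def using j(1) by blast
  qed
qed

lemma lex_less_cong:
  assumes "\<forall>i\<in>{1..p}. a i = a' i" "\<forall>i\<in>{1..p}. b i = b' i"
  shows "lex_less p a b \<longleftrightarrow> lex_less p a' b'"
proof -
  have "(\<forall>i\<in>{1..<j}. a i = b i) \<longleftrightarrow> (\<forall>i\<in>{1..<j}. a' i = b' i)" if "j \<in> {1..p}" for j
    using assms that by (intro ball_cong) auto
  then show ?thesis
    unfolding lex_less_def using assms by (intro bex_cong) auto
qed

lemma ell_cong: "\<forall>i\<in>{1..p}. a i = a' i \<Longrightarrow> ell p a = ell p a'"
  unfolding ell_def by (intro arg_cong[where f = card]) auto

lemma P_less_cong:
  assumes "\<forall>i\<in>{1..p}. a i = a' i" "\<forall>i\<in>{1..p}. b i = b' i"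
  shows "P_less p a b \<longleftrightarrow> P_less p a' b'"
  unfolding P_less_def
  by (simp add: ell_cong[OF assms(1)] ell_cong[OF assms(2)] lex_less_cong[OF assms])

lemma P_less_irrefl: "\<not> P_less p a a"
  unfolding P_less_def using lex_less_irrefl by auto

lemma P_less_trans: "P_less p a b \<Longrightarrow> P_less p b c \<Longrightarrow> P_less p a c"
  unfolding P_less_def using lex_less_trans[of p a b c] by auto

lemma P_less_asym: "P_less p a b \<Longrightarrow> \<not> P_less p b a"
  using P_less_trans P_less_irrefl by blast

lemma P_less_total: "\<exists>i\<in>{1..p}. a i \<noteq> b i \<Longrightarrow> P_less p a b \<or> P_less p b a"
  unfolding P_less_def using lex_less_total[of p a b] by auto

lemma P_less_fun_upd:
  assumes "j \<in> {1..p}" "\<forall>i\<in>{1..<j}. a i = b i" "a j < b j" "a j \<noteq> 1" "b j \<noteq> 1"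
  shows "P_less p (b(j := a j)) b"
proof -
  have "ell p (b(j := a j)) = ell p b"
    unfolding ell_def using assms(4,5) by (intro arg_cong[where f = card]) auto
  moreover have "lex_less p (b(j := a j)) b"
    unfolding lex_less_def using assms(1-3) by (intro bexI[of _ j]) auto
  ultimately show ?thesis
    unfolding P_less_def by simp
qed

section \<open>Sorting and shelling\<close>

lemma finite_has_least_wrt:
  assumes "finite A" "A \<noteq> {}"
    and irrefl: "\<forall>x\<in>A. \<not> R x x"
    and trans: "\<forall>x\<in>A. \<forall>y\<in>A. \<forall>z\<in>A. R x y \<longrightarrow> R y z \<longrightarrow> R x z"
    and total: "\<forall>x\<in>A. \<forall>y\<in>A. x \<noteq> y \<longrightarrow> R x y \<or> R y x"
  obtains m where "m \<in> A" "\<forall>y\<in>A - {m}. R m y"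
proof -
  let ?r = "{(x, y). x \<in> A \<and> y \<in> A \<and> R x y}"
  have "trans ?r"
    using trans unfolding trans_def by blast
  then have "acyclic ?r"
    using irrefl by (simp add: acyclic_irrefl trancl_id irrefl_def)
  moreover have "finite ?r"
    by (rule finite_subset[of _ "A \<times> A"]) (auto simp: assms(1))
  ultimately have "wf ?r"
    by (rule finite_acyclic_wf[rotated])
  moreover obtain x where "x \<in> A"
    using assms(2) by blast
  ultimately obtain m where "m \<in> A" "\<And>y. (y, m) \<in> ?r \<Longrightarrow> y \<notin> A"
    by (rule wfE_min) blast
  then have "\<forall>y\<in>A - {m}. R m y"
    using total by blast
  then show thesis
    using that \<open>m \<in> A\<close> by blast
qed

lemma sorted_wrt_list_exists:
  assumes "finite A"
    and "\<forall>x\<in>A. \<not> R x x"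
    and "\<forall>x\<in>A. \<forall>y\<in>A. \<forall>z\<in>A. R x y \<longrightarrow> R y z \<longrightarrow> R x z"
    and "\<forall>x\<in>A. \<forall>y\<in>A. x \<noteq> y \<longrightarrow> R x y \<or> R y x"
  shows "\<exists>xs. distinct xs \<and> set xs = A \<and> sorted_wrt R xs"
  using assms
proof (induction A rule: finite_remove_induct)
  case empty
  then show ?case by simp
next
  case (remove A)
  obtain m where m: "m \<in> A" "\<forall>y\<in>A - {m}. R m y"
    using finite_has_least_wrt[OF remove.hyps(1,2) remove.prems] .
  have "\<exists>xs. distinct xs \<and> set xs = A - {m} \<and> sorted_wrt R xs"
    by (rule remove.IH[OF m(1)]) (use remove.prems in auto)
  then obtain xs where "distinct xs" "set xs = A - {m}" "sorted_wrt R xs"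
    by blast
  then show ?case
    using m by (intro exI[of _ "m # xs"]) auto
qed

lemma shelling_order_if_exchange:
  assumes exchange: "\<forall>F\<in>A. \<forall>G\<in>A. R F G \<longrightarrow> (\<exists>H\<in>A. R H G \<and> (\<exists>v\<in>G - F. G - H = {v}))"
    and asym: "\<forall>F\<in>A. \<forall>G\<in>A. R F G \<longrightarrow> \<not> R G F"
    and Fs: "set Fs = A" "sorted_wrt R Fs"
  shows "shelling_order Fs"
  unfolding shelling_order_def
proof (intro allI impI)
  fix i j
  assume ij: "i < j \<and> j < length Fs"
  then have "R (Fs ! i) (Fs ! j)" "Fs ! i \<in> A" "Fs ! j \<in> A"
    using Fs by (auto simp: sorted_wrt_nth_less)
  then obtain H v where H: "H \<in> A" "R H (Fs ! j)" and v: "v \<in> Fs ! j - Fs ! i" "Fs ! j - H = {v}"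
    using exchange by blast
  then obtain l where l: "l < length Fs" "Fs ! l = H"
    using Fs(1) by (auto simp: in_set_conv_nth)
  have "l \<noteq> j"
    using v(2) l(2) by auto
  moreover have "\<not> j < l"
  proof
    assume "j < l"
    then have "R (Fs ! j) H"
      using Fs(2) l by (auto simp: sorted_wrt_nth_less)
    then show False
      using asym H \<open>Fs ! j \<in> A\<close> by blast
  qed
  ultimately have "l < j"
    by simp
  then show "\<exists>v\<in>Fs ! j - Fs ! i. \<exists>l<j. Fs ! j - Fs ! l = {v}"
    using v l by blast
qed

section \<open>Heights and minimal odd-TD-sets\<close>

lemma walk_Cons:
  assumes "walk E xs" "{x, hd xs} \<in> E"
  shows "walk E (x # xs)"
  using assms unfolding walk_def by (auto simp: nth_Cons hd_conv_nth split: nat.split)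

lemma walk_ConsD:
  assumes "walk E (x # y # ys)"
  shows "{x, y} \<in> E" "walk E (y # ys)"
proof -
  have steps: "\<forall>i. i + 1 < length (x # y # ys) \<longrightarrow> {(x # y # ys) ! i, (x # y # ys) ! (i + 1)} \<in> E"
    using assms unfolding walk_def by blast
  show "{x, y} \<in> E"
    using steps[rule_format, of 0] by simp
  show "walk E (y # ys)"
    unfolding walk_def using steps[rule_format, of "Suc _"] by simp
qed

lemma gdist_le_length:
  assumes "walk E xs" "hd xs = x" "last xs = y"
  shows "gdist E x y < length xs"
proof -
  have "xs \<noteq> []"
    using assms(1) unfolding walk_def by simp
  then have "gdist E x y \<le> length xs - 1"
    unfolding gdist_def using assms by (intro Least_le exI[of _ xs]) simp
  with \<open>xs \<noteq> []\<close> show ?thesis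
    by (cases xs) auto
qed

lemma vheight_le_gdist: "is_leaf V E l \<Longrightarrow> vheight V E v \<le> gdist E v l"
  unfolding vheight_def by (rule Least_le) blast

lemma nbhd_set_iff: "y \<in> nbhd_set E D \<longleftrightarrow> (\<exists>e\<in>D. {y, e} \<in> E)"
  unfolding nbhd_set_def nbhd_def by auto

lemma minimal_odd_TD_set_private_nbr:
  assumes "minimal_odd_TD_set V E D" "d \<in> D"
  obtains y where "y \<in> V_odd V E" "{y, d} \<in> E" "\<forall>e\<in>D - {d}. {y, e} \<notin> E"
proof -
  have D: "D \<subseteq> V" "V_odd V E \<subseteq> nbhd_set E D" and "\<not> odd_TD_set V E (D - {d})"
    using assms unfolding minimal_odd_TD_set_def odd_TD_set_def by auto
  then obtain y where "y \<in> V_odd V E" "y \<notin> nbhd_set E (D - {d})"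
    unfolding odd_TD_set_def by blast
  moreover from this have "y \<in> nbhd_set E D"
    using D(2) by blast
  ultimately show thesis
    using that by (auto simp: nbhd_set_iff)
qed

lemma minimal_odd_TD_set_pendant:
  assumes "minimal_odd_TD_set V E D" "l \<in> D" "nbhd E l = {x}" "e \<in> D" "{x, e} \<in> E"
  shows "e = l"
proof -
  obtain y where "{y, l} \<in> E" "\<forall>e\<in>D - {l}. {y, e} \<notin> E"
    using minimal_odd_TD_set_private_nbr[OF assms(1,2)] by blast
  moreover from this have "y = x"
    using assms(3) unfolding nbhd_def by blast
  ultimately show ?thesis
    using assms(4,5) by blast
qed

locale graph_with_leaf =
  fixes V :: "'a set" and E :: "'a set set"
  assumes simple: "simple_graph V E"
    and connected: "connected_graph V E"
    and leaf_exists: "\<exists>l. is_leaf V E l"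
begin

abbreviation h :: "'a \<Rightarrow> nat" where
  "h \<equiv> vheight V E"

lemma finite_V: "finite V"
  using simple unfolding simple_graph_def by blast

lemma edge_vertices:
  assumes "{x, y} \<in> E"
  shows "x \<in> V" "y \<in> V"
  using simple assms unfolding simple_graph_def by (auto simp: doubleton_eq_iff)

lemma shortest_walk:
  assumes "x \<in> V" "y \<in> V"
  obtains xs where "walk E xs" "hd xs = x" "last xs = y" "length xs = gdist E x y + 1"
proof -
  obtain xs where "walk E xs" "hd xs = x" "last xs = y"
    using connected assms unfolding connected_graph_def by blast
  then have "\<exists>n xs. walk E xs \<and> hd xs = x \<and> last xs = y \<and> length xs = n + 1"
    by (intro exI[of _ "length xs - 1"] exI[of _ xs]) (auto simp: walk_def)
  from LeastI_ex[OF this] show thesis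
    using that unfolding gdist_def by blast
qed

lemma vheight_attained:
  obtains l where "is_leaf V E l" "gdist E v l = h v"
proof -
  have "\<exists>n l. is_leaf V E l \<and> gdist E v l = n"
    using leaf_exists by blast
  from LeastI_ex[OF this] show thesis
    using that unfolding vheight_def by blast
qed

lemma vheight_edge_le:
  assumes "{x, y} \<in> E"
  shows "h x \<le> Suc (h y)"
proof -
  obtain l where l: "is_leaf V E l" "gdist E y l = h y"
    by (rule vheight_attained)
  obtain ys where ys: "walk E ys" "hd ys = y" "last ys = l" "length ys = h y + 1"
    using shortest_walk[of y l] edge_vertices[OF assms] l unfolding is_leaf_def by metis
  then have "walk E (x # ys)" "last (x # ys) = l"
    using assms walk_Cons by auto
  then have "gdist E x l \<le> Suc (h y)"
    using gdist_le_length[of E "x # ys" x l] ys(4) by simp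
  then show ?thesis
    using vheight_le_gdist[OF l(1), of x] by simp
qed

lemma vheight_eq_0_iff:
  assumes "v \<in> V"
  shows "h v = 0 \<longleftrightarrow> is_leaf V E v"
proof
  assume "h v = 0"
  obtain l where l: "is_leaf V E l" "gdist E v l = 0"
    using vheight_attained \<open>h v = 0\<close> by metis
  then obtain xs where "hd xs = v" "last xs = l" "length xs = 1"
    using shortest_walk[OF assms, of l] unfolding is_leaf_def by auto
  then have "v = l"
    by (cases xs) auto
  with l show "is_leaf V E v"
    by simp
next
  assume "is_leaf V E v"
  then show "h v = 0"
    using vheight_le_gdist[of V E v v] gdist_le_length[of E "[v]" v v] by (simp add: walk_def)
qed

lemma vheight_Suc_nbr:
  assumes "v \<in> V" "h v = Suc n"
  obtains x where "{v, x} \<in> E" "h x = n"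
proof -
  obtain l where l: "is_leaf V E l" "gdist E v l = Suc n"
    using vheight_attained assms(2) by metis
  obtain xs where xs: "walk E xs" "hd xs = v" "last xs = l" "length xs = n + 2"
    using shortest_walk[OF assms(1), of l] l unfolding is_leaf_def by auto
  define x where "x = hd (tl xs)"
  define ys where "ys = tl (tl xs)"
  have xs_eq: "xs = v # x # ys"
    unfolding x_def ys_def using xs(2,4) by (cases xs; cases "tl xs") auto
  from xs(1) have "walk E (v # x # ys)"
    unfolding xs_eq .
  then have edge: "{v, x} \<in> E" and walk: "walk E (x # ys)"
    by (rule walk_ConsD)+
  have "last (x # ys) = l" "length (x # ys) = Suc n"
    using xs(3,4) unfolding xs_eq by simp_all
  then have "h x \<le> n"
    using gdist_le_length[OF walk, of x l] vheight_le_gdist[OF l(1), of x] by simp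
  moreover have "n \<le> h x"
    using vheight_edge_le[OF edge] assms(2) by simp
  ultimately show thesis
    using that edge by simp
qed

lemma balanced_edge_vheight:
  assumes "balanced V E" "{x, y} \<in> E"
  shows "h y = Suc (h x) \<or> h x = Suc (h y)"
proof -
  have "{y, x} \<in> E"
    using assms(2) by (simp add: insert_commute)
  then show ?thesis
    using assms vheight_edge_le[of x y] vheight_edge_le[of y x] unfolding balanced_def by force
qed

lemma balanced_edge_parity:
  assumes "balanced V E" "{x, y} \<in> E"
  shows "odd (h x) \<longleftrightarrow> even (h y)"
  using balanced_edge_vheight[OF assms] by auto

lemma minimal_odd_TD_set_even:
  assumes "balanced V E" "minimal_odd_TD_set V E D" "d \<in> D"
  shows "even (h d)"
proof -
  obtain y where "y \<in> V_odd V E" "{y, d} \<in> E"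
    using minimal_odd_TD_set_private_nbr[OF assms(2,3)] by blast
  then show ?thesis
    using balanced_edge_parity[OF assms(1)] unfolding V_odd_def by blast
qed

end

section \<open>Minimal odd-TD-sets of balanced trees of height 3\<close>

locale height3_labelling = graph_with_leaf V E for V :: "'a set" and E +
  fixes p :: nat and s :: "nat \<Rightarrow> 'a" and u :: "nat \<Rightarrow> nat \<Rightarrow> 'a" and k :: "nat \<Rightarrow> nat"
  assumes bal: "balanced V E"
    and ht: "tree_height V E = 3"
    and s_inj: "inj_on s {1..p}"
    and s_V1: "s ` {1..p} = level V E 1"
    and u1: "\<forall>i\<in>{1..p}. nbhd E (s i) \<inter> level V E 2 = {u i 1}"
    and k_def: "\<forall>i\<in>{1..p}. k i = card (nbhd E (s i))"
    and u_leaves: "\<forall>i\<in>{1..p}. inj_on (u i) {2..k i} \<and>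
                     u i ` {2..k i} = nbhd E (s i) \<inter> level V E 0"
begin

lemma vheight_le_3: "v \<in> V \<Longrightarrow> h v \<le> 3"
  using ht finite_V unfolding tree_height_def by (metis Max_ge finite_imageI imageI)

lemma level1_s:
  assumes "i \<in> {1..p}"
  shows "s i \<in> V" "h (s i) = 1"
  using s_V1 assms unfolding level_def by auto

lemma level2_u1:
  assumes "i \<in> {1..p}"
  shows "u i 1 \<in> V" "h (u i 1) = 2" "{u i 1, s i} \<in> E"
  using u1 assms unfolding level_def nbhd_def by auto

lemma leaf_u:
  assumes "i \<in> {1..p}" "t \<in> {2..k i}"
  shows "u i t \<in> V" "h (u i t) = 0" "{u i t, s i} \<in> E" "nbhd E (u i t) = {s i}"
proof -
  have "u i t \<in> nbhd E (s i) \<inter> level V E 0"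
    using u_leaves assms by blast
  then show "u i t \<in> V" "h (u i t) = 0" and edge: "{u i t, s i} \<in> E"
    unfolding level_def nbhd_def by auto
  then obtain x where "nbhd E (u i t) = {x}"
    using vheight_eq_0_iff unfolding is_leaf_def by (metis card_1_singletonE)
  moreover have "s i \<in> nbhd E (u i t)"
    using edge unfolding nbhd_def by (simp add: insert_commute)
  ultimately show "nbhd E (u i t) = {s i}"
    by simp
qed

lemma leaf_u_inj:
  assumes "i \<in> {1..p}" "j \<in> {1..p}" "t \<in> {2..k i}" "t' \<in> {2..k j}" "u i t = u j t'"
  shows "i = j" "t = t'"
proof -
  have "s i = s j"
    using leaf_u(4)[OF assms(1,3)] leaf_u(4)[OF assms(2,4)] assms(5) by simp
  then show "i = j"
    using s_inj assms(1,2) unfolding inj_on_def by blast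
  then show "t = t'"
    using u_leaves assms(1,3,4,5) unfolding inj_on_def by blast
qed

lemma leaf_u_ne_u1:
  assumes "i \<in> {1..p}" "j \<in> {1..p}" "t \<in> {2..k i}"
  shows "u i t \<noteq> u j 1"
  using leaf_u(2)[OF assms(1,3)] level2_u1(2)[OF assms(2)] by auto

lemma k_ge_1:
  assumes "i \<in> {1..p}"
  shows "1 \<le> k i"
proof -
  have "nbhd E (s i) \<subseteq> V"
    using edge_vertices unfolding nbhd_def by blast
  then have "finite (nbhd E (s i))"
    using finite_V by (rule finite_subset)
  moreover have "u i 1 \<in> nbhd E (s i)"
    using level2_u1(3)[OF assms] unfolding nbhd_def by simp
  ultimately show ?thesis
    using k_def assms by (metis card_gt_0_iff empty_iff less_eq_Suc_le One_nat_def)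
qed

lemma even_nbr_s:
  assumes "i \<in> {1..p}" "{s i, e} \<in> E" "even (h e)"
  obtains t where "t \<in> {1..k i}" "e = u i t"
proof -
  have e: "e \<in> V" "{e, s i} \<in> E"
    using edge_vertices assms(2) by (auto simp: insert_commute)
  have "h e \<le> 2"
    using vheight_edge_le[OF e(2)] level1_s(2)[OF assms(1)] by simp
  then have "h e = 0 \<or> h e = 2"
    using assms(3) by presburger
  then show thesis
  proof
    assume "h e = 0"
    then have "e \<in> nbhd E (s i) \<inter> level V E 0"
      using e unfolding level_def nbhd_def by simp
    then have "e \<in> u i ` {2..k i}"
      using u_leaves assms(1) by simp
    then obtain t where "t \<in> {2..k i}" "e = u i t"
      by blast
    then show thesis
      by (intro that[of t]) auto
  next
    assume "h e = 2"
    then have "e \<in> nbhd E (s i) \<inter> level V E 2"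
      using e unfolding level_def nbhd_def by simp
    then have "e = u i 1"
      using u1[rule_format, OF assms(1)] by blast
    then show thesis
      using k_ge_1[OF assms(1)] by (intro that[of 1]) auto
  qed
qed

lemma even_vertex_nbr_s:
  assumes "v \<in> V" "even (h v)"
  obtains i where "i \<in> {1..p}" "{s i, v} \<in> E"
proof -
  obtain x where x: "{v, x} \<in> E" "h x = 1"
  proof (cases "h v = 0")
    case True
    then obtain x where "nbhd E v = {x}"
      using vheight_eq_0_iff[OF assms(1)] unfolding is_leaf_def by (metis card_1_singletonE)
    then have edge: "{v, x} \<in> E"
      unfolding nbhd_def by (auto simp: insert_commute)
    have "h x \<le> 1"
      using vheight_edge_le[of x v] edge True by (simp add: insert_commute)
    moreover have "h x \<noteq> 0"
      using bal edge True unfolding balanced_def by metis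
    ultimately show thesis
      using that edge by simp
  next
    case False
    then have "h v = Suc 1"
      using vheight_le_3[OF assms(1)] assms(2) by presburger
    then show thesis
      using vheight_Suc_nbr[OF assms(1)] that by blast
  qed
  then have "x \<in> level V E 1"
    using edge_vertices unfolding level_def by blast
  then obtain i where "i \<in> {1..p}" "x = s i"
    using s_V1 by (metis imageE)
  then show thesis
    using that x(1) by (simp add: insert_commute)
qed

definition admissible :: "(nat \<Rightarrow> nat) \<Rightarrow> bool" where
  "admissible a \<longleftrightarrow> (\<forall>i\<in>{1..p}. 1 \<le> a i \<and> a i \<le> k i)"

definition choice_set :: "(nat \<Rightarrow> nat) \<Rightarrow> 'a set" where
  "choice_set a = (\<lambda>i. u i (a i)) ` {1..p}"

text \<open>If s_i is dominated through u_{i,1} and s_j shares this neighbour,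
  a leaf chosen for s_j would be redundant.\<close>

definition u1_closed :: "(nat \<Rightarrow> nat) \<Rightarrow> bool" where
  "u1_closed a \<longleftrightarrow> (\<forall>i\<in>{1..p}. \<forall>j\<in>{1..p}. u i 1 = u j 1 \<longrightarrow> a i = 1 \<longrightarrow> a j = 1)"

lemma admissibleE:
  assumes "admissible a" "i \<in> {1..p}"
  obtains "a i = 1" | "a i \<in> {2..k i}"
  using assms unfolding admissible_def by force

lemma chosen_vertex:
  assumes "admissible a" "i \<in> {1..p}"
  shows "{u i (a i), s i} \<in> E" "u i (a i) \<in> V_even V E"
  using assms level2_u1[OF assms(2)] leaf_u[OF assms(2)] unfolding V_even_def
  by (cases rule: admissibleE; simp)+

lemma choice_set_subset: "admissible a \<Longrightarrow> choice_set a \<subseteq> V_even V E"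
  using chosen_vertex(2) unfolding choice_set_def by blast

lemma choice_set_leaf:
  assumes "admissible b" "i \<in> {1..p}" "t \<in> {2..k i}" "u i t \<in> choice_set b"
  shows "b i = t"
proof -
  obtain j where j: "j \<in> {1..p}" "u i t = u j (b j)"
    using assms(4) unfolding choice_set_def by blast
  show ?thesis
  proof (cases rule: admissibleE[OF assms(1) j(1)])
    case 1
    then show ?thesis
      using leaf_u_ne_u1[OF assms(2) j(1) assms(3)] j(2) by simp
  next
    case 2
    then show ?thesis
      using leaf_u_inj[OF assms(2) j(1) assms(3) 2 j(2)] by simp
  qed
qed

lemma choice_set_inj:
  assumes "admissible a" "admissible b" "choice_set a = choice_set b" "i \<in> {1..p}"
  shows "a i = b i"
proof -
  have a_in: "u i (a i) \<in> choice_set b" and b_in: "u i (b i) \<in> choice_set a"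
    using assms(3,4) unfolding choice_set_def by auto
  show ?thesis
  proof (cases rule: admissibleE[OF assms(1,4)])
    case 1
    show ?thesis
    proof (cases rule: admissibleE[OF assms(2,4)])
      case 2
      then show ?thesis
        using choice_set_leaf[OF assms(1,4) 2 b_in] by simp
    qed (use 1 in simp)
  next
    case 2
    then show ?thesis
      using choice_set_leaf[OF assms(2,4) 2 a_in] by simp
  qed
qed

lemma choice_set_nbr_s:
  assumes "admissible a" "u1_closed a" "i \<in> {1..p}" "e \<in> choice_set a" "{e, s i} \<in> E"
  shows "e = u i (a i)"
proof -
  obtain j where j: "j \<in> {1..p}" "e = u j (a j)"
    using assms(4) unfolding choice_set_def by blast
  show ?thesis
  proof (cases rule: admissibleE[OF assms(1) j(1)])
    case 1
    then have "e \<in> nbhd E (s i) \<inter> level V E 2"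
      using level2_u1[OF j(1)] j(2) assms(5) unfolding nbhd_def level_def by simp
    then have "u j 1 = u i 1"
      using u1[rule_format, OF assms(3)] j(2) 1 by simp
    then have "a i = 1"
      using assms(2) j(1) assms(3) 1 unfolding u1_closed_def by blast
    then show ?thesis
      using \<open>u j 1 = u i 1\<close> j(2) 1 by simp
  next
    case 2
    have "s i \<in> nbhd E e"
      using assms(5) unfolding nbhd_def by (simp add: insert_commute)
    then have "s i = s j"
      using leaf_u(4)[OF j(1) 2] j(2) by simp
    then have "i = j"
      using s_inj assms(3) j(1) unfolding inj_on_def by blast
    then show ?thesis
      using j(2) by simp
  qed
qed

lemma odd_TD_set_choice_set:
  assumes "admissible a" "level V E 3 \<subseteq> nbhd_set E (choice_set a)"
  shows "odd_TD_set V E (choice_set a)"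
  unfolding odd_TD_set_def
proof
  show "choice_set a \<subseteq> V"
    using choice_set_subset[OF assms(1)] unfolding V_even_def by blast
  show "V_odd V E \<subseteq> nbhd_set E (choice_set a)"
  proof
    fix y
    assume "y \<in> V_odd V E"
    then have y: "y \<in> V" "odd (h y)"
      unfolding V_odd_def by auto
    then have "h y = 1 \<or> h y = 3"
      using vheight_le_3[OF y(1)] by presburger
    then show "y \<in> nbhd_set E (choice_set a)"
    proof
      assume "h y = 1"
      then have "y \<in> level V E 1"
        using y(1) unfolding level_def by simp
      then obtain i where i: "i \<in> {1..p}" "y = s i"
        using s_V1 by (metis imageE)
      have "u i (a i) \<in> choice_set a"
        using i(1) unfolding choice_set_def by blast
      moreover have "{y, u i (a i)} \<in> E"
        using chosen_vertex(1)[OF assms(1) i(1)] i(2) by (simp add: insert_commute)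
      ultimately show ?thesis
        unfolding nbhd_set_iff by blast
    next
      assume "h y = 3"
      then show ?thesis
        using assms(2) y(1) unfolding level_def by blast
    qed
  qed
qed

lemma minimal_odd_TD_set_choice_setI:
  assumes "admissible a" "u1_closed a" "level V E 3 \<subseteq> nbhd_set E (choice_set a)"
  shows "minimal_odd_TD_set V E (choice_set a)"
  unfolding minimal_odd_TD_set_def
proof (intro conjI allI impI notI)
  show "odd_TD_set V E (choice_set a)"
    using odd_TD_set_choice_set assms(1,3) .
  fix D'
  assume D': "D' \<subset> choice_set a" "odd_TD_set V E D'"
  then obtain i where i: "i \<in> {1..p}" "u i (a i) \<notin> D'"
    unfolding choice_set_def by blast
  have "s i \<in> nbhd_set E D'"
    using D'(2) level1_s[OF i(1)] unfolding odd_TD_set_def V_odd_def by auto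
  then obtain e where e: "e \<in> D'" "{s i, e} \<in> E"
    unfolding nbhd_set_iff by blast
  moreover have "{e, s i} \<in> E"
    using e(2) by (simp add: insert_commute)
  ultimately have "e = u i (a i)"
    using choice_set_nbr_s[OF assms(1,2) i(1)] D'(1) by blast
  then show False
    using e(1) i(2) by simp
qed

lemma minimal_odd_TD_set_choice_setD:
  assumes "admissible a" "minimal_odd_TD_set V E (choice_set a)"
  shows "level V E 3 \<subseteq> nbhd_set E (choice_set a)" "u1_closed a"
proof -
  show "level V E 3 \<subseteq> nbhd_set E (choice_set a)"
    using assms(2) unfolding minimal_odd_TD_set_def odd_TD_set_def level_def V_odd_def by auto
  show "u1_closed a"
    unfolding u1_closed_def
  proof (intro ballI impI)
    fix i j
    assume ij: "i \<in> {1..p}" "j \<in> {1..p}" "u i 1 = u j 1" "a i = 1"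
    show "a j = 1"
    proof (rule ccontr)
      assume "a j \<noteq> 1"
      then have t: "a j \<in> {2..k j}"
        by (cases rule: admissibleE[OF assms(1) ij(2)]) auto
      have leaf_in: "u j (a j) \<in> choice_set a"
        using ij(2) unfolding choice_set_def by blast
      have u1_in: "u i 1 \<in> choice_set a"
        unfolding choice_set_def by (rule image_eqI[of _ _ i]) (use ij in simp_all)
      have "{s j, u i 1} \<in> E"
        using level2_u1(3)[OF ij(2)] ij(3) by (simp add: insert_commute)
      then have "u i 1 = u j (a j)"
        by (rule minimal_odd_TD_set_pendant[OF assms(2) leaf_in leaf_u(4)[OF ij(2) t] u1_in])
      then show False
        using leaf_u_ne_u1[OF ij(2,1) t] by simp
    qed
  qed
qed

lemma minimal_odd_TD_set_unique_nbr_s: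
  assumes D: "minimal_odd_TD_set V E D" and i: "i \<in> {1..p}"
    and d: "d \<in> D" "{s i, d} \<in> E" and d': "d' \<in> D" "{s i, d'} \<in> E"
  shows "d = d'"
proof -
  obtain t where t: "t \<in> {1..k i}" "d = u i t"
    using even_nbr_s[OF i d(2) minimal_odd_TD_set_even[OF bal D d(1)]] .
  obtain t' where t': "t' \<in> {1..k i}" "d' = u i t'"
    using even_nbr_s[OF i d'(2) minimal_odd_TD_set_even[OF bal D d'(1)]] .
  show ?thesis
  proof (cases "t = 1")
    case True
    show ?thesis
    proof (cases "t' = 1")
      case True
      then show ?thesis
        using \<open>t = 1\<close> t(2) t'(2) by simp
    next
      case False
      then have "nbhd E d' = {s i}"
        using leaf_u(4)[OF i] t' by simp
      from minimal_odd_TD_set_pendant[OF D d'(1) this d] show ?thesis .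
    qed
  next
    case False
    then have "nbhd E d = {s i}"
      using leaf_u(4)[OF i] t by simp
    from minimal_odd_TD_set_pendant[OF D d(1) this d'] show ?thesis
      by simp
  qed
qed

lemma minimal_odd_TD_set_is_choice_set:
  assumes D: "minimal_odd_TD_set V E D"
  obtains a where "admissible a" "D = choice_set a"
proof -
  have D_V: "D \<subseteq> V" and dominates: "V_odd V E \<subseteq> nbhd_set E D"
    using D unfolding minimal_odd_TD_set_def odd_TD_set_def by auto
  have "\<exists>t. t \<in> {1..k i} \<and> u i t \<in> D" if i: "i \<in> {1..p}" for i
  proof -
    have "s i \<in> nbhd_set E D"
      using dominates level1_s[OF i] unfolding V_odd_def by auto
    then obtain e where e: "e \<in> D" "{s i, e} \<in> E"
      unfolding nbhd_set_iff by blast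
    moreover obtain t where "t \<in> {1..k i}" "e = u i t"
      using even_nbr_s[OF i e(2) minimal_odd_TD_set_even[OF bal D e(1)]] .
    ultimately show ?thesis
      by blast
  qed
  then obtain a where a: "\<forall>i\<in>{1..p}. a i \<in> {1..k i} \<and> u i (a i) \<in> D"
    by metis
  then have adm: "admissible a"
    unfolding admissible_def by auto
  have "D \<subseteq> choice_set a"
  proof
    fix d
    assume "d \<in> D"
    then obtain i where i: "i \<in> {1..p}" "{s i, d} \<in> E"
      using even_vertex_nbr_s D_V minimal_odd_TD_set_even[OF bal D] by blast
    have "{s i, u i (a i)} \<in> E"
      using chosen_vertex(1)[OF adm i(1)] by (simp add: insert_commute)
    then have "d = u i (a i)"
      using minimal_odd_TD_set_unique_nbr_s[OF D i(1) \<open>d \<in> D\<close> i(2)] a i(1) by blast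
    then show "d \<in> choice_set a"
      using i(1) unfolding choice_set_def by blast
  qed
  moreover have "choice_set a \<subseteq> D"
    using a unfolding choice_set_def by blast
  ultimately show thesis
    using that adm by blast
qed

section \<open>Exchange and shelling\<close>

text \<open>A vertex of height 3 has no leaf neighbour, so it is dominated through some
  u_{i,1} with b_i = 1, which g keeps.\<close>

lemma minimal_odd_TD_set_choice_set_mono:
  assumes g: "admissible g" "u1_closed g"
    and b: "admissible b" "minimal_odd_TD_set V E (choice_set b)"
    and ones: "\<forall>i\<in>{1..p}. b i = 1 \<longrightarrow> g i = 1"
  shows "minimal_odd_TD_set V E (choice_set g)"
proof (rule minimal_odd_TD_set_choice_setI[OF g])
  show "level V E 3 \<subseteq> nbhd_set E (choice_set g)"
  proof
    fix y
    assume y: "y \<in> level V E 3"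
    then have "y \<in> nbhd_set E (choice_set b)"
      using minimal_odd_TD_set_choice_setD(1)[OF b] by blast
    then obtain i where i: "i \<in> {1..p}" "{y, u i (b i)} \<in> E"
      unfolding nbhd_set_iff choice_set_def by blast
    show "y \<in> nbhd_set E (choice_set g)"
    proof (cases rule: admissibleE[OF b(1) i(1)])
      case 1
      then have "u i (b i) = u i (g i)"
        using ones i(1) by simp
      moreover have "u i (g i) \<in> choice_set g"
        using i(1) unfolding choice_set_def by blast
      ultimately show ?thesis
        using i(2) unfolding nbhd_set_iff by metis
    next
      case 2
      have "y \<in> nbhd E (u i (b i))"
        using i(2) unfolding nbhd_def by simp
      then have "y = s i"
        using leaf_u(4)[OF i(1) 2] by simp
      then show ?thesis
        using y level1_s(2)[OF i(1)] unfolding level_def by simp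
    qed
  qed
qed

lemma choice_set_diff_singleton:
  assumes "\<forall>i\<in>{1..p}. g i = b i \<or> u i (g i) = v" "v \<in> choice_set g" "v \<notin> choice_set b"
  shows "choice_set g - choice_set b = {v}"
proof -
  have "x = v" if x: "x \<in> choice_set g - choice_set b" for x
  proof -
    obtain i where i: "i \<in> {1..p}" "x = u i (g i)"
      using x unfolding choice_set_def by blast
    have "u i (b i) \<in> choice_set b"
      using i(1) unfolding choice_set_def by blast
    then show ?thesis
      using assms(1) i x by force
  qed
  then show ?thesis
    using assms(2,3) by blast
qed

lemma u1_notin_choice_set:
  assumes "admissible b" "u1_closed b" "m \<in> {1..p}" "b m \<noteq> 1"
  shows "u m 1 \<notin> choice_set b"
proof
  assume "u m 1 \<in> choice_set b"
  then obtain j where j: "j \<in> {1..p}" "u m 1 = u j (b j)"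
    unfolding choice_set_def by blast
  show False
  proof (cases rule: admissibleE[OF assms(1) j(1)])
    case 1
    then have "b m = 1"
      using assms(2) j assms(3) unfolding u1_closed_def by (metis (no_types, lifting))
    then show False
      using assms(4) by simp
  next
    case 2
    then show False
      using leaf_u_ne_u1[OF j(1) assms(3) 2] j(2) by simp
  qed
qed

lemma u1_closed_raise:
  assumes "u1_closed b"
  shows "u1_closed (\<lambda>i. if u i 1 = u m 1 then 1 else b i)"
  unfolding u1_closed_def
proof (intro ballI impI)
  fix i j
  assume ij: "i \<in> {1..p}" "j \<in> {1..p}" "u i 1 = u j 1" "(if u i 1 = u m 1 then 1 else b i) = 1"
  show "(if u j 1 = u m 1 then 1 else b j) = 1"
  proof (cases "u i 1 = u m 1")
    case True
    then show ?thesis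
      using ij(3) by simp
  next
    case False
    then have "b i = 1"
      using ij(4) by simp
    then have "b j = 1"
      using assms ij(1-3) unfolding u1_closed_def by blast
    then show ?thesis
      by simp
  qed
qed

lemma exchange_to_u1:
  assumes b: "admissible b" "minimal_odd_TD_set V E (choice_set b)"
    and m: "m \<in> {1..p}" "b m \<noteq> 1"
  obtains g where "admissible g" "minimal_odd_TD_set V E (choice_set g)" "ell p b < ell p g"
    "choice_set g - choice_set b = {u m 1}"
proof -
  define g where "g = (\<lambda>i. if u i 1 = u m 1 then 1 else b i)"
  have closed_b: "u1_closed b"
    using minimal_odd_TD_set_choice_setD(2)[OF b] .
  have adm: "admissible g"
    using b(1) k_ge_1 unfolding admissible_def g_def by auto
  have ones: "\<forall>i\<in>{1..p}. b i = 1 \<longrightarrow> g i = 1"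
    unfolding g_def by simp
  have minimal: "minimal_odd_TD_set V E (choice_set g)"
    using minimal_odd_TD_set_choice_set_mono[OF adm _ b ones] u1_closed_raise[OF closed_b]
    unfolding g_def by blast
  have "u m 1 \<in> choice_set g"
    unfolding choice_set_def by (rule image_eqI[of _ _ m]) (use m(1) in \<open>simp_all add: g_def\<close>)
  moreover have "\<forall>i\<in>{1..p}. g i = b i \<or> u i (g i) = u m 1"
    unfolding g_def by simp
  ultimately have "choice_set g - choice_set b = {u m 1}"
    using choice_set_diff_singleton u1_notin_choice_set[OF b(1) closed_b m] by blast
  moreover have "ell p b < ell p g"
  proof -
    have "{i \<in> {1..p}. b i = 1} \<subset> {i \<in> {1..p}. g i = 1}"
      using ones m unfolding g_def by auto
    then show ?thesis
      unfolding ell_def by (intro psubset_card_mono) auto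
  qed
  ultimately show thesis
    using that adm minimal by blast
qed

lemma exchange_to_leaf:
  assumes b: "admissible b" "minimal_odd_TD_set V E (choice_set b)"
    and j: "j \<in> {1..p}" "t \<in> {2..k j}" "b j \<noteq> 1" "b j \<noteq> t"
  shows "admissible (b(j := t))" "minimal_odd_TD_set V E (choice_set (b(j := t)))"
    "choice_set (b(j := t)) - choice_set b = {u j t}"
proof -
  have closed_b: "u1_closed b"
    using minimal_odd_TD_set_choice_setD(2)[OF b] .
  show adm: "admissible (b(j := t))"
    unfolding admissible_def
  proof
    fix i
    assume "i \<in> {1..p}"
    then show "1 \<le> (b(j := t)) i \<and> (b(j := t)) i \<le> k i"
      using b(1) j(2) unfolding admissible_def by (cases "i = j") auto
  qed
  have ones: "\<forall>i\<in>{1..p}. b i = 1 \<longrightarrow> (b(j := t)) i = 1"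
    using j(3) by (simp add: fun_upd_apply)
  have "u1_closed (b(j := t))"
    unfolding u1_closed_def
  proof (intro ballI impI)
    fix i i'
    assume ii: "i \<in> {1..p}" "i' \<in> {1..p}" "u i 1 = u i' 1" "(b(j := t)) i = 1"
    then have "b i = 1"
      using j(2) by (cases "i = j") auto
    then have "b i' = 1"
      using closed_b ii(1-3) unfolding u1_closed_def by blast
    then show "(b(j := t)) i' = 1"
      using j(3) by (cases "i' = j") auto
  qed
  then show "minimal_odd_TD_set V E (choice_set (b(j := t)))"
    using minimal_odd_TD_set_choice_set_mono[OF adm _ b ones] by blast
  have "u j t \<notin> choice_set b"
    using choice_set_leaf[OF b(1) j(1,2)] j(4) by blast
  moreover have "u j t \<in> choice_set (b(j := t))"
    unfolding choice_set_def by (rule image_eqI[of _ _ j]) (use j(1) in simp_all)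
  moreover have "\<forall>i\<in>{1..p}. (b(j := t)) i = b i \<or> u i ((b(j := t)) i) = u j t"
    by simp
  ultimately show "choice_set (b(j := t)) - choice_set b = {u j t}"
    using choice_set_diff_singleton by blast
qed

lemma choice_set_exchange:
  assumes a: "admissible a" and b: "admissible b" "minimal_odd_TD_set V E (choice_set b)"
    and less: "P_less p a b"
  obtains g v where "admissible g" "minimal_odd_TD_set V E (choice_set g)" "P_less p g b"
    "v \<in> choice_set a - choice_set b" "choice_set g - choice_set b = {v}"
proof (cases "\<exists>m\<in>{1..p}. a m = 1 \<and> b m \<noteq> 1")
  case True
  then obtain m where m: "m \<in> {1..p}" "a m = 1" "b m \<noteq> 1"
    by blast
  obtain g where g: "admissible g" "minimal_odd_TD_set V E (choice_set g)" "ell p b < ell p g"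
    "choice_set g - choice_set b = {u m 1}"
    using exchange_to_u1[OF b m(1,3)] .
  have "u m 1 \<in> choice_set a"
    unfolding choice_set_def by (rule image_eqI[of _ _ m]) (use m in simp_all)
  moreover have "u m 1 \<notin> choice_set b"
    using g(4) by blast
  moreover have "P_less p g b"
    using g(3) unfolding P_less_def by simp
  ultimately show thesis
    using that g by blast
next
  case False
  then have "{i \<in> {1..p}. a i = 1} \<subseteq> {i \<in> {1..p}. b i = 1}"
    by blast
  then have "ell p a \<le> ell p b"
    unfolding ell_def by (intro card_mono) auto
  then have "lex_less p a b"
    using less unfolding P_less_def by simp
  then obtain j where j: "j \<in> {1..p}" "\<forall>i\<in>{1..<j}. a i = b i" "a j < b j"
    unfolding lex_less_def by blast
  have "a j \<noteq> 1"
    using False j(1,3) by auto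
  then have aj: "a j \<in> {2..k j}"
    using bspec[OF a[unfolded admissible_def] j(1)] by auto
  then have bj: "b j \<noteq> 1" "b j \<noteq> a j"
    using j(3) by auto
  note g = exchange_to_leaf[OF b j(1) aj bj]
  have "u j (a j) \<in> choice_set a - choice_set b"
    using j(1) g(3) unfolding choice_set_def by blast
  then show thesis
    using that[OF g(1,2) P_less_fun_upd[OF j \<open>a j \<noteq> 1\<close> bj(1)]] g(3) by blast
qed

lemma S_even_facets_eq:
  "S_even_facets V E =
     {V_even V E - choice_set a | a. admissible a \<and> minimal_odd_TD_set V E (choice_set a)}"
proof
  show "S_even_facets V E \<subseteq> {V_even V E - choice_set a | a. admissible a \<and> minimal_odd_TD_set V E (choice_set a)}"
  proof
    fix F
    assume "F \<in> S_even_facets V E"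
    then obtain D where D: "F = V_even V E - D" "minimal_odd_TD_set V E D"
      unfolding S_even_facets_def by blast
    moreover obtain a where "admissible a" "D = choice_set a"
      using minimal_odd_TD_set_is_choice_set[OF D(2)] .
    ultimately show "F \<in> {V_even V E - choice_set a | a. admissible a \<and> minimal_odd_TD_set V E (choice_set a)}"
      by blast
  qed
qed (auto simp: S_even_facets_def)

lemma facet_eq_iff:
  assumes "admissible a" "admissible b"
  shows "V_even V E - choice_set a = V_even V E - choice_set b \<longleftrightarrow> (\<forall>i\<in>{1..p}. a i = b i)"
proof
  assume "V_even V E - choice_set a = V_even V E - choice_set b"
  then have "choice_set a = choice_set b"
    using choice_set_subset[OF assms(1)] choice_set_subset[OF assms(2)] by blast
  then show "\<forall>i\<in>{1..p}. a i = b i"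
    using choice_set_inj[OF assms] by blast
next
  assume "\<forall>i\<in>{1..p}. a i = b i"
  then have "choice_set a = choice_set b"
    unfolding choice_set_def by (intro image_cong) simp_all
  then show "V_even V E - choice_set a = V_even V E - choice_set b"
    by simp
qed

text \<open>The vector \<nu>(F); only its values on {1..p} are determined.\<close>

definition nu :: "'a set \<Rightarrow> nat \<Rightarrow> nat" where
  "nu F = (SOME a. admissible a \<and> minimal_odd_TD_set V E (choice_set a) \<and> F = V_even V E - choice_set a)"

lemma facet_nu:
  assumes "F \<in> S_even_facets V E"
  shows "admissible (nu F)" "minimal_odd_TD_set V E (choice_set (nu F))"
    "F = V_even V E - choice_set (nu F)"
proof -
  have "\<exists>a. admissible a \<and> minimal_odd_TD_set V E (choice_set a) \<and> F = V_even V E - choice_set a"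
    using assms unfolding S_even_facets_eq by blast
  from someI_ex[OF this] show "admissible (nu F)" "minimal_odd_TD_set V E (choice_set (nu F))"
    "F = V_even V E - choice_set (nu F)"
    unfolding nu_def by blast+
qed

definition facet_less :: "'a set \<Rightarrow> 'a set \<Rightarrow> bool" where
  "facet_less F G \<longleftrightarrow> (\<exists>a b. admissible a \<and> admissible b \<and>
     F = V_even V E - choice_set a \<and> G = V_even V E - choice_set b \<and> P_less p a b)"

lemma facet_less_iff:
  assumes "admissible a" "admissible b"
  shows "facet_less (V_even V E - choice_set a) (V_even V E - choice_set b) \<longleftrightarrow> P_less p a b"
proof
  assume "facet_less (V_even V E - choice_set a) (V_even V E - choice_set b)"
  then obtain a' b' where a'b': "admissible a'" "admissible b'"
    "V_even V E - choice_set a = V_even V E - choice_set a'"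
    "V_even V E - choice_set b = V_even V E - choice_set b'" "P_less p a' b'"
    unfolding facet_less_def by blast
  then have "\<forall>i\<in>{1..p}. a i = a' i" "\<forall>i\<in>{1..p}. b i = b' i"
    using facet_eq_iff assms by blast+
  then show "P_less p a b"
    using P_less_cong a'b'(5) by blast
qed (use assms facet_less_def in blast)

lemma facet_less_nu:
  assumes "F \<in> S_even_facets V E" "G \<in> S_even_facets V E"
  shows "facet_less F G \<longleftrightarrow> P_less p (nu F) (nu G)"
  using facet_less_iff[OF facet_nu(1)[OF assms(1)] facet_nu(1)[OF assms(2)]]
  by (simp flip: facet_nu(3)[OF assms(1)] facet_nu(3)[OF assms(2)])

lemma facet_exchange:
  assumes F: "F \<in> S_even_facets V E" and G: "G \<in> S_even_facets V E" and less: "facet_less F G"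
  shows "\<exists>H\<in>S_even_facets V E. facet_less H G \<and> (\<exists>v\<in>G - F. G - H = {v})"
proof -
  obtain g v where g: "admissible g" "minimal_odd_TD_set V E (choice_set g)" "P_less p g (nu G)"
    and v: "v \<in> choice_set (nu F) - choice_set (nu G)" "choice_set g - choice_set (nu G) = {v}"
    using choice_set_exchange[OF facet_nu(1)[OF F] facet_nu(1,2)[OF G]] less facet_less_nu[OF F G] by blast
  let ?H = "V_even V E - choice_set g"
  have "?H \<in> S_even_facets V E"
    unfolding S_even_facets_eq using g(1,2) by blast
  moreover have "facet_less ?H G"
    using facet_less_iff[OF g(1) facet_nu(1)[OF G]] g(3) facet_nu(3)[OF G] by simp
  moreover have "v \<in> G - F"
    using v(1) choice_set_subset[OF facet_nu(1)[OF F]] facet_nu(3)[OF F] facet_nu(3)[OF G] by blast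
  moreover have "G - ?H = {v}"
    using v(2) choice_set_subset[OF g(1)] facet_nu(3)[OF G] by blast
  ultimately show ?thesis
    by blast
qed

lemma sorted_facets_exist:
  "\<exists>Fs. distinct Fs \<and> set Fs = S_even_facets V E \<and> sorted_wrt facet_less Fs"
proof (rule sorted_wrt_list_exists)
  show "finite (S_even_facets V E)"
    by (rule finite_subset[of _ "Pow V"]) (auto simp: S_even_facets_def V_even_def finite_V)
  show "\<forall>F\<in>S_even_facets V E. \<not> facet_less F F"
    using facet_less_nu P_less_irrefl by blast
  show "\<forall>F\<in>S_even_facets V E. \<forall>G\<in>S_even_facets V E. \<forall>H\<in>S_even_facets V E.
      facet_less F G \<longrightarrow> facet_less G H \<longrightarrow> facet_less F H"
    using facet_less_nu P_less_trans by blast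
  show "\<forall>F\<in>S_even_facets V E. \<forall>G\<in>S_even_facets V E. F \<noteq> G \<longrightarrow> facet_less F G \<or> facet_less G F"
  proof (intro ballI impI)
    fix F G
    assume F: "F \<in> S_even_facets V E" and G: "G \<in> S_even_facets V E" and "F \<noteq> G"
    then have "\<exists>i\<in>{1..p}. nu F i \<noteq> nu G i"
      using facet_eq_iff[OF facet_nu(1)[OF F] facet_nu(1)[OF G]] facet_nu(3)[OF F] facet_nu(3)[OF G] by auto
    then show "facet_less F G \<or> facet_less G F"
      using P_less_total facet_less_nu[OF F G] facet_less_nu[OF G F] by blast
  qed
qed

lemma sorted_facets_shelling:
  assumes "set Fs = S_even_facets V E" "sorted_wrt facet_less Fs"
  shows "shelling_order Fs"
proof (rule shelling_order_if_exchange[OF _ _ assms])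
  show "\<forall>F\<in>S_even_facets V E. \<forall>G\<in>S_even_facets V E. facet_less F G \<longrightarrow>
      (\<exists>H\<in>S_even_facets V E. facet_less H G \<and> (\<exists>v\<in>G - F. G - H = {v}))"
    using facet_exchange by blast
  show "\<forall>F\<in>S_even_facets V E. \<forall>G\<in>S_even_facets V E. facet_less F G \<longrightarrow> \<not> facet_less G F"
    using facet_less_nu P_less_asym by blast
qed

end

text \<open>Without leaves every vertex has the junk height LEAST n. False, so balancedness
  forbids all edges and no odd vertex can be dominated.\<close>

lemma S_even_facets_empty_if_no_leaf:
  assumes "balanced V E" "\<not> (\<exists>l. is_leaf V E l)" "V_odd V E \<noteq> {}"
  shows "S_even_facets V E = {}"
proof -
  have same_height: "vheight V E x = vheight V E y" for x y
    using assms(2) unfolding vheight_def by simp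
  obtain v where "v \<in> V_odd V E"
    using assms(3) by blast
  have "\<not> minimal_odd_TD_set V E D" for D
  proof
    assume "minimal_odd_TD_set V E D"
    then have "v \<in> nbhd_set E D"
      using \<open>v \<in> V_odd V E\<close> unfolding minimal_odd_TD_set_def odd_TD_set_def by blast
    then obtain e where "{v, e} \<in> E"
      unfolding nbhd_set_iff by blast
    then show False
      using assms(1) same_height unfolding balanced_def by blast
  qed
  then show ?thesis
    unfolding S_even_facets_def by blast
qed

theorem theorem4p22:
  fixes V :: "'a set" and E :: "'a set set"
    and p :: nat and s :: "nat \<Rightarrow> 'a" and u :: "nat \<Rightarrow> nat \<Rightarrow> 'a" and k :: "nat \<Rightarrow> nat"
  assumes tree: "is_tree V E"
    and unm: "unmixed V E"
    and bal: "balanced V E"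
    and ht: "tree_height V E = 3"
    and s_inj: "inj_on s {1..p}"
    and s_V1: "s ` {1..p} = level V E 1"
    and u1: "\<forall>i\<in>{1..p}. nbhd E (s i) \<inter> level V E 2 = {u i 1}"
    and k_def: "\<forall>i\<in>{1..p}. k i = card (nbhd E (s i))"
    and u_leaves: "\<forall>i\<in>{1..p}. inj_on (u i) {2..k i} \<and>
                     u i ` {2..k i} = nbhd E (s i) \<inter> level V E 0"
  shows "(\<forall>F\<in>S_even_facets V E. \<exists>a. (\<forall>i\<in>{1..p}. 1 \<le> a i \<and> a i \<le> k i) \<and>
            F = V_even V E - (\<lambda>i. u i (a i)) ` {1..p})
       \<and> (let nu_less = (\<lambda>F G. \<exists>a b.
                 (\<forall>i\<in>{1..p}. 1 \<le> a i \<and> a i \<le> k i) \<and> (\<forall>i\<in>{1..p}. 1 \<le> b i \<and> b i \<le> k i) \<and>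
                 F = V_even V E - (\<lambda>i. u i (a i)) ` {1..p} \<and>
                 G = V_even V E - (\<lambda>i. u i (b i)) ` {1..p} \<and> P_less p a b)
          in (\<exists>Fs. distinct Fs \<and> set Fs = S_even_facets V E \<and> sorted_wrt nu_less Fs)
           \<and> (\<forall>Fs. distinct Fs \<and> set Fs = S_even_facets V E \<and> sorted_wrt nu_less Fs
                  \<longrightarrow> shelling_order Fs))"
proof (cases "\<exists>l. is_leaf V E l")
  case True
  interpret height3_labelling V E p s u k
    using tree True bal ht s_inj s_V1 u1 k_def u_leaves unfolding is_tree_def
    by unfold_locales auto
  have "\<forall>F\<in>S_even_facets V E. \<exists>a. admissible a \<and> F = V_even V E - choice_set a"
    using facet_nu(1,3) by blast
  then show ?thesis
    using sorted_facets_exist sorted_facets_shelling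
    unfolding Let_def facet_less_def[abs_def, unfolded admissible_def choice_set_def, symmetric]
    unfolding admissible_def choice_set_def by blast
next
  case False
  have "finite V" "V \<noteq> {}"
    using tree unfolding is_tree_def simple_graph_def by auto
  then obtain v where "v \<in> V" "vheight V E v = 3"
    using ht Max_in[of "vheight V E ` V"] unfolding tree_height_def by auto
  then have "V_odd V E \<noteq> {}"
    unfolding V_odd_def by auto
  then have "S_even_facets V E = {}"
    using S_even_facets_empty_if_no_leaf bal False by blast
  then show ?thesis
    by (auto simp: Let_def shelling_order_def intro: exI[of _ "[]"])
qed

end
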